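(* Let $(X,f)$ be a dynamical system. The following are equivalent: (1) $(X,f)$ is multi-transitive; (2) $(X,f)$ is $\mathcal{F}[\infty]$-transitive; (3) $(X,f)$ is $\nabla(\mathcal{F}[\infty])$-point transitive.
   Context: A dynamical system is a pair $(X,f)$ with $X$ a compact metric space and $f:X\to X$ continuous. $\mathbb{N}=\{1,2,\dots\}$, $\mathbb{Z}_+=\{0,1,2,\dots\}$. $N(U,V)=\{n\in\mathbb{N}: U\cap f^{-n}(V)\neq\emptyset\}$, $N(x,U)=\{n\in\mathbb{N}: f^n(x)\in U\}$. $(X,f)$ is transitive if $N(U,V)\neq\emptyset$ for all non-empty open $U,V$. For a family $\mathcal{F}$ of subsets of $\mathbb{N}$: $(X,f)$ is $\mathcal{F}$-transitive if $N(U,V)\in\mathcal{F}$ for all non-empty open $U,V$; $x$ is an $\mathcal{F}$-transitive point if $N(x,U)\in\mathcal{F}$ for every non-empty open $U$, and $(X,f)$ is $\mathcal{F}$-point transitive if such a point exists. For $F\subset\mathbb{N}$, $F-F=\{a-b:a,b\in F,\ a>b\}$ and $\nabla(\mathcal{F})=\{F\subset\mathbb{N}: F-F\in\mathcal{F}\}$. $(X,f)$ is multi-transitive if for every $n\in\mathbb{N}$ the system $(X^n,f\times f^2\times\dots\times f^n)$ is transitive. For $\mathbf{a}\in\mathbb{N}^r$, $\mathcal{F}[\mathbf{a}]$ is the collection of all $F\subset\mathbb{N}$ such that for every $(n_1,\dots,n_r)\in\mathbb{Z}_+^r$ there is $k\in\mathbb{N}$ with $ka_i+n_i\in F$ for all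 $i$; and $\mathcal{F}[\infty]=\bigcap_{i=1}^\infty\mathcal{F}[(1,2,\dots,i)]$. *)

theory Defs
  imports "HOL-Analysis.Analysis"
begin

text \<open>Return-time sets. Natural numbers \<open>\<nat> = {1,2,...}\<close> are modelled as positive nats.\<close>

definition hitset :: "'a topology \<Rightarrow> ('a \<Rightarrow> 'a) \<Rightarrow> 'a set \<Rightarrow> 'a set \<Rightarrow> nat set" where
  "hitset T g U V = {n. n > 0 \<and> U \<inter> (g ^^ n) -` V \<noteq> {}}"

definition visitset :: "('a \<Rightarrow> 'a) \<Rightarrow> 'a \<Rightarrow> 'a set \<Rightarrow> nat set" where
  "visitset g x U = {n. n > 0 \<and> (g ^^ n) x \<in> U}"

definition transitive_sys :: "'a topology \<Rightarrow> ('a \<Rightarrow> 'a) \<Rightarrow> bool" where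
  "transitive_sys T g \<longleftrightarrow>
     (\<forall>U V. openin T U \<and> U \<noteq> {} \<and> openin T V \<and> V \<noteq> {} \<longrightarrow> hitset T g U V \<noteq> {})"

definition fam_transitive :: "nat set set \<Rightarrow> 'a topology \<Rightarrow> ('a \<Rightarrow> 'a) \<Rightarrow> bool" where
  "fam_transitive Fam T g \<longleftrightarrow>
     (\<forall>U V. openin T U \<and> U \<noteq> {} \<and> openin T V \<and> V \<noteq> {} \<longrightarrow> hitset T g U V \<in> Fam)"

definition fam_point_transitive :: "nat set set \<Rightarrow> 'a topology \<Rightarrow> ('a \<Rightarrow> 'a) \<Rightarrow> bool" where
  "fam_point_transitive Fam T g \<longleftrightarrow>
     (\<exists>x \<in> topspace T. \<forall>U. openin T U \<and> U \<noteq> {} \<longrightarrow> visitset g x U \<in> Fam)"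

text \<open>Multi-transitivity: \<open>(X^n, f \<times> f^2 \<times> ... \<times> f^n)\<close> transitive for all n \<ge> 1;
  X^n is the product topology on functions {0..<n} \<rightarrow> X, coordinate i carries f^(i+1).\<close>
definition multi_transitive :: "'a topology \<Rightarrow> ('a \<Rightarrow> 'a) \<Rightarrow> bool" where
  "multi_transitive T f \<longleftrightarrow>
     (\<forall>n::nat. n \<ge> 1 \<longrightarrow>
        transitive_sys (product_topology (\<lambda>i. T) {..<n})
          (\<lambda>x. restrict (\<lambda>i. (f ^^ Suc i) (x i)) {..<n}))"

definition diffset :: "nat set \<Rightarrow> nat set" where
  "diffset F = {a - b | a b. a \<in> F \<and> b \<in> F \<and> a > b}"

definition nabla :: "nat set set \<Rightarrow> nat set set" where
  "nabla Fam = {F. diffset F \<in> Fam}"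

definition Fvec :: "nat list \<Rightarrow> nat set set" where
  "Fvec a = {F. \<forall>ns::nat list. length ns = length a \<longrightarrow>
                 (\<exists>k>0. \<forall>i < length a. k * a ! i + ns ! i \<in> F)}"

definition Finf :: "nat set set" where
  "Finf = (\<Inter>i\<in>{1..}. Fvec [1..<Suc i])"

end

theory Submission
  imports Defs
begin

(* Multi-transitivity amounts to: for nonempty open U_i, V_i (i < r) a single k > 0 makes every
   f^(k(i+1)) U_i meet V_i. Replacing V_i by f^-n_i V puts k(i+1) + n_i into N(U,V), which is
   F[\<infinity>]-transitivity. Conversely, F[\<infinity>] consists of infinite sets, so all the V_i and then all
   the U_i can be pulled back along increasing times q_i \<le> p_i into single nonempty open sets V', U';
   a pattern k(i+1) + (p_i - q_i) in N(U',V') is then a common k for the boxes.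
   The points x for which the return-time differences D(N(x,U)) contain a given pattern form open
   sets, dense by F[\<infinity>]-transitivity applied to N(U,U); Baire's theorem over a countable base gives a
   \<nabla>(F[\<infinity>])-transitive point. Conversely, N(U,V) contains a translate of D(N(x,W)) for
   W = U \<inter> f^-p V. *)

lemma Fvec_upt: "F \<in> Fvec [1..<Suc r] \<longleftrightarrow>
      (\<forall>ns. length ns = r \<longrightarrow> (\<exists>k>0. \<forall>i<r. k * Suc i + ns ! i \<in> F))"
  unfolding Fvec_def by (simp del: upt_Suc)

lemma Finf_iff: "F \<in> Finf \<longleftrightarrow> (\<forall>ns. \<exists>k>0. \<forall>i<length ns. k * Suc i + ns ! i \<in> F)"
proof -
  have "F \<in> Finf \<longleftrightarrow> (\<forall>r\<in>{1..}. \<forall>ns. length ns = r \<longrightarrow> (\<exists>k>0. \<forall>i<r. k * Suc i + ns ! i \<in> F))"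
    unfolding Finf_def INT_iff Fvec_upt ..
  also have "\<dots> \<longleftrightarrow> (\<forall>r. \<forall>ns. length ns = r \<longrightarrow> (\<exists>k>0. \<forall>i<r. k * Suc i + ns ! i \<in> F))"
  proof (intro iffI allI impI)
    fix r and ns :: "nat list"
    assume "\<forall>r\<in>{1..}. \<forall>ns. length ns = r \<longrightarrow> (\<exists>k>0. \<forall>i<r. k * Suc i + ns ! i \<in> F)"
      and "length ns = r"
    then show "\<exists>k>0. \<forall>i<r. k * Suc i + ns ! i \<in> F"
      by (cases r) auto
  qed auto
  finally show ?thesis by blast
qed

lemma Finf_iff_fun: "F \<in> Finf \<longleftrightarrow> (\<forall>r (n::nat \<Rightarrow> nat). \<exists>k>0. \<forall>i<r. k * Suc i + n i \<in> F)"
  unfolding Finf_iff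
proof (intro iffI allI)
  fix r and n :: "nat \<Rightarrow> nat"
  assume "\<forall>ns. \<exists>k>0. \<forall>i<length ns. k * Suc i + ns ! i \<in> F"
  from this[rule_format, of "map n [0..<r]"] show "\<exists>k>0. \<forall>i<r. k * Suc i + n i \<in> F"
    by auto
next
  fix ns :: "nat list"
  assume "\<forall>r (n::nat \<Rightarrow> nat). \<exists>k>0. \<forall>i<r. k * Suc i + n i \<in> F"
  from this[rule_format, of "length ns" "(!) ns"]
  show "\<exists>k>0. \<forall>i<length ns. k * Suc i + ns ! i \<in> F" .
qed

lemma Finf_infinite: "F \<in> Finf \<Longrightarrow> infinite F"
  unfolding infinite_nat_iff_unbounded_le
proof
  fix m assume "F \<in> Finf"
  from this[unfolded Finf_iff_fun, rule_format, of 1 "\<lambda>_. m"]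
  obtain k where "k > 0" "k * Suc 0 + m \<in> F"
    by auto
  then show "\<exists>n\<ge>m. n \<in> F" by (intro exI[of _ "k + m"]) auto
qed

lemma Finf_shift:
  assumes "F \<in> Finf" and "\<And>a. a \<in> F \<Longrightarrow> a + p \<in> G"
  shows "G \<in> Finf"
  unfolding Finf_iff_fun
proof (intro allI)
  fix r and n :: "nat \<Rightarrow> nat"
  obtain k where k: "k > 0" "\<forall>i<r. k * Suc i + (n i + p * i) \<in> F"
    using assms(1)[unfolded Finf_iff_fun, rule_format, of r "\<lambda>i. n i + p * i"] by blast
  have "(k + p) * Suc i + n i = k * Suc i + (n i + p * i) + p" for i
    by (simp add: algebra_simps)
  then have "\<forall>i<r. (k + p) * Suc i + n i \<in> G"
    using k(2) assms(2) by metis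
  with k(1) show "\<exists>k>0. \<forall>i<r. k * Suc i + n i \<in> G"
    by (intro exI[of _ "k + p"]) auto
qed

lemma Finf_mono: "F \<in> Finf \<Longrightarrow> F \<subseteq> G \<Longrightarrow> G \<in> Finf"
  using Finf_shift[of F 0 G] by auto

lemma funpow_funpow_apply: "(f ^^ m) ((f ^^ n) x) = (f ^^ (m + n)) x"
  by (simp add: funpow_add)

lemma mem_diffset_visitset:
  "d \<in> diffset (visitset g x U) \<longleftrightarrow> d > 0 \<and> (\<exists>b>0. (g ^^ b) x \<in> U \<and> (g ^^ (b + d)) x \<in> U)"
proof
  assume "d > 0 \<and> (\<exists>b>0. (g ^^ b) x \<in> U \<and> (g ^^ (b + d)) x \<in> U)"
  then obtain b where "d > 0" "b > 0" "(g ^^ b) x \<in> U" "(g ^^ (b + d)) x \<in> U" by blast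
  then show "d \<in> diffset (visitset g x U)"
    unfolding diffset_def visitset_def by (intro CollectI exI[of _ "b + d"] exI[of _ b]) auto
qed (force simp: diffset_def visitset_def)

lemma diffset_visitset_mono: "U \<subseteq> V \<Longrightarrow> diffset (visitset g x U) \<subseteq> diffset (visitset g x V)"
  unfolding diffset_def visitset_def by blast

lemma fam_transitive_mono: "fam_transitive Fam T g \<Longrightarrow> Fam \<subseteq> Fam' \<Longrightarrow> fam_transitive Fam' T g"
  unfolding fam_transitive_def by blast

lemma Finf_transitive_imp_infinite_transitive:
  "fam_transitive Finf T g \<Longrightarrow> fam_transitive {F. infinite F} T g"
  by (rule fam_transitive_mono) (auto dest: Finf_infinite)

definition box_multi_transitive :: "'a topology \<Rightarrow> ('a \<Rightarrow> 'a) \<Rightarrow> bool" where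
  "box_multi_transitive T f \<longleftrightarrow>
     (\<forall>r U V. (\<forall>i<r. openin T (U i) \<and> U i \<noteq> {} \<and> openin T (V i) \<and> V i \<noteq> {}) \<longrightarrow>
        (\<exists>k>0. \<forall>i<r. U i \<inter> (f ^^ (k * Suc i)) -` V i \<noteq> {}))"

lemma box_multi_transitive_imp_transitive:
  assumes "box_multi_transitive T f"
  shows "transitive_sys T f"
  unfolding transitive_sys_def hitset_def
proof (intro allI impI)
  fix U V assume "openin T U \<and> U \<noteq> {} \<and> openin T V \<and> V \<noteq> {}"
  then obtain k where "k > 0" "\<forall>i<1. U \<inter> (f ^^ (k * Suc i)) -` V \<noteq> {}"
    using assms[unfolded box_multi_transitive_def, rule_format, of 1 "\<lambda>_. U" "\<lambda>_. V"] by blast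
  then show "{n. 0 < n \<and> U \<inter> (f ^^ n) -` V \<noteq> {}} \<noteq> {}"
    by auto
qed

lemma funpow_diagonal_product_map:
  fixes f :: "'a \<Rightarrow> 'a"
  shows "x \<in> extensional I \<Longrightarrow> ((\<lambda>x. restrict (\<lambda>i. (f ^^ Suc i) (x i)) I) ^^ k) x
       = restrict (\<lambda>i. (f ^^ (k * Suc i)) (x i)) I"
proof (induction k)
  case 0
  then show ?case by (auto simp: restrict_def extensional_def fun_eq_iff)
next
  case (Suc k)
  let ?g = "\<lambda>x. restrict (\<lambda>i. (f ^^ Suc i) (x i)) I"
  have "(?g ^^ Suc k) x = ?g ((?g ^^ k) x)"
    by simp
  also have "\<dots> = ?g (restrict (\<lambda>i. (f ^^ (k * Suc i)) (x i)) I)"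
    using Suc.IH[OF Suc.prems] by (rule arg_cong)
  also have "\<dots> = restrict (\<lambda>i. (f ^^ (Suc k * Suc i)) (x i)) I"
    by (rule ext) (simp add: funpow_add algebra_simps)
  finally show ?case .
qed

lemma openin_product_topology_contains_box:
  assumes "openin (product_topology (\<lambda>i. T) I) W" and "W \<noteq> {}"
  obtains B where "\<forall>i\<in>I. openin T (B i) \<and> B i \<noteq> {}" and "PiE I B \<subseteq> W"
proof -
  obtain w where "w \<in> W" using assms(2) by blast
  with assms(1) obtain B where "\<forall>i\<in>I. openin T (B i)" "w \<in> PiE I B" "PiE I B \<subseteq> W"
    unfolding openin_product_topology_alt by blast
  moreover from this(2) have "\<forall>i\<in>I. B i \<noteq> {}"
    unfolding PiE_iff by blast
  ultimately show ?thesis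
    using that by blast
qed

lemma multi_transitive_imp_box_multi_transitive:
  assumes multi: "multi_transitive T f"
  shows "box_multi_transitive T f"
  unfolding box_multi_transitive_def
proof (intro allI impI)
  fix r and U V :: "nat \<Rightarrow> 'a set"
  assume UV: "\<forall>i<r. openin T (U i) \<and> U i \<noteq> {} \<and> openin T (V i) \<and> V i \<noteq> {}"
  show "\<exists>k>0. \<forall>i<r. U i \<inter> (f ^^ (k * Suc i)) -` V i \<noteq> {}"
  proof (cases "r = 0")
    case False
    let ?P = "product_topology (\<lambda>i. T) {..<r}"
    let ?g = "\<lambda>x. restrict (\<lambda>i. (f ^^ Suc i) (x i)) {..<r}"
    have "transitive_sys ?P ?g"
      using multi False unfolding multi_transitive_def by simp
    moreover have "openin ?P (PiE {..<r} U)" "openin ?P (PiE {..<r} V)"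
      "PiE {..<r} U \<noteq> {}" "PiE {..<r} V \<noteq> {}"
      using UV by (simp_all add: openin_PiE_gen PiE_eq_empty_iff)
    ultimately have "hitset ?P ?g (PiE {..<r} U) (PiE {..<r} V) \<noteq> {}"
      unfolding transitive_sys_def by blast
    then obtain k z where k: "k > 0" and z: "z \<in> PiE {..<r} U" "(?g ^^ k) z \<in> PiE {..<r} V"
      unfolding hitset_def by blast
    have "z i \<in> U i \<inter> (f ^^ (k * Suc i)) -` V i" if "i < r" for i
      using z that funpow_diagonal_product_map[where x=z and I="{..<r}" and f=f and k=k]
      by (simp add: PiE_iff)
    with k show ?thesis by blast
  qed auto
qed

lemma box_multi_transitive_imp_multi_transitive:
  assumes box: "box_multi_transitive T f"
  shows "multi_transitive T f"
  unfolding multi_transitive_def transitive_sys_def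
proof (intro allI impI)
  fix n :: nat and U V
  let ?P = "product_topology (\<lambda>i. T) {..<n}"
  let ?g = "\<lambda>x. restrict (\<lambda>i. (f ^^ Suc i) (x i)) {..<n}"
  assume UV: "openin ?P U \<and> U \<noteq> {} \<and> openin ?P V \<and> V \<noteq> {}"
  obtain BU where BU: "\<forall>i\<in>{..<n}. openin T (BU i) \<and> BU i \<noteq> {}" "PiE {..<n} BU \<subseteq> U"
    using openin_product_topology_contains_box[of T "{..<n}" U] UV by blast
  obtain BV where BV: "\<forall>i\<in>{..<n}. openin T (BV i) \<and> BV i \<noteq> {}" "PiE {..<n} BV \<subseteq> V"
    using openin_product_topology_contains_box[of T "{..<n}" V] UV by blast
  obtain k where k: "k > 0" and "\<forall>i<n. BU i \<inter> (f ^^ (k * Suc i)) -` BV i \<noteq> {}"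
    using box[unfolded box_multi_transitive_def, rule_format, of n BU BV] BU(1) BV(1) by auto
  then have "\<exists>xs. \<forall>i. i < n \<longrightarrow> xs i \<in> BU i \<and> (f ^^ (k * Suc i)) (xs i) \<in> BV i"
    by (intro choice) blast
  then obtain xs where xs: "\<forall>i<n. xs i \<in> BU i \<and> (f ^^ (k * Suc i)) (xs i) \<in> BV i"
    by blast
  let ?z = "restrict xs {..<n}"
  have "?z \<in> PiE {..<n} BU"
    using xs by (simp add: PiE_iff)
  moreover have "(?g ^^ k) ?z \<in> PiE {..<n} BV"
    using xs funpow_diagonal_product_map[where x="?z" and I="{..<n}" and f=f and k=k]
    by (simp add: PiE_iff)
  ultimately have "?z \<in> U" "(?g ^^ k) ?z \<in> V"
    using BU(2) BV(2) by blast+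
  then show "hitset ?P ?g U V \<noteq> {}"
    using k unfolding hitset_def by blast
qed

lemma multi_transitive_iff_box_multi_transitive: "multi_transitive T f \<longleftrightarrow> box_multi_transitive T f"
  using multi_transitive_imp_box_multi_transitive box_multi_transitive_imp_multi_transitive by blast

locale dynamical_system =
  fixes T :: "'a topology" and f :: "'a \<Rightarrow> 'a"
  assumes continuous_map_self: "continuous_map T T f"
begin

lemma continuous_map_funpow: "continuous_map T T (f ^^ n)"
proof (induction n)
  case (Suc n)
  then show ?case using continuous_map_compose[OF Suc continuous_map_self] by (simp add: comp_def)
qed simp

lemma funpow_in_topspace: "x \<in> topspace T \<Longrightarrow> (f ^^ n) x \<in> topspace T"
  using continuous_map_image_subset_topspace[OF continuous_map_funpow] by blast

lemma openin_Int_vimage_funpow: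
  assumes "openin T U" and "openin T A"
  shows "openin T (U \<inter> (f ^^ n) -` A)"
proof -
  have "U \<inter> (f ^^ n) -` A = U \<inter> {x \<in> topspace T. (f ^^ n) x \<in> A}"
    using openin_subset[OF assms(1)] by blast
  then show ?thesis
    using openin_continuous_map_preimage[OF continuous_map_funpow assms(2)] assms(1) by auto
qed

lemma transitive_vimage_nonempty:
  assumes "transitive_sys T f" and "openin T A" and "A \<noteq> {}"
  shows "topspace T \<inter> (f ^^ n) -` A \<noteq> {}"
proof (induction n)
  case 0
  then show ?case using openin_subset[OF assms(2)] assms(3) by auto
next
  case (Suc n)
  have "openin T (topspace T \<inter> (f ^^ n) -` A)"
    using openin_Int_vimage_funpow[OF openin_topspace assms(2)] .
  with Suc assms(1) have "hitset T f (topspace T) (topspace T \<inter> (f ^^ n) -` A) \<noteq> {}"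
    unfolding transitive_sys_def by blast
  then obtain j x where "x \<in> topspace T" "(f ^^ Suc j) x \<in> (f ^^ n) -` A"
    unfolding hitset_def by (auto simp: gr0_conv_Suc)
  moreover have "(f ^^ Suc n) ((f ^^ j) x) = (f ^^ n) ((f ^^ Suc j) x)"
    by (simp only: funpow_funpow_apply) simp
  ultimately have "(f ^^ j) x \<in> topspace T \<inter> (f ^^ Suc n) -` A"
    using funpow_in_topspace by simp
  then show ?case by blast
qed

lemma infinite_transitive_common_pullback:
  fixes r :: nat and b :: "nat \<Rightarrow> nat"
  assumes "fam_transitive {F. infinite F} T f" and "openin T W0" and "W0 \<noteq> {}"
    and "\<forall>i<r. openin T (A i) \<and> A i \<noteq> {}"
  shows "\<exists>W p. openin T W \<and> W \<noteq> {} \<and> W \<subseteq> W0 \<and> (\<forall>i<r. b i \<le> p i \<and> W \<subseteq> (f ^^ p i) -` A i)"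
  using assms(4)
proof (induction r)
  case 0
  then show ?case using assms(2,3) by blast
next
  case (Suc r)
  then obtain W p where W: "openin T W" "W \<noteq> {}" "W \<subseteq> W0"
    and p: "\<forall>i<r. b i \<le> p i \<and> W \<subseteq> (f ^^ p i) -` A i"
    by auto
  have A: "openin T (A r)" "A r \<noteq> {}"
    using Suc.prems by auto
  then have "infinite (hitset T f W (A r))"
    using assms(1) W unfolding fam_transitive_def by blast
  then obtain q where q: "b r \<le> q" "q \<in> hitset T f W (A r)"
    using infinite_nat_iff_unbounded_le by blast
  let ?W = "W \<inter> (f ^^ q) -` A r"
  have "openin T ?W" "?W \<noteq> {}" "?W \<subseteq> W0"
    using openin_Int_vimage_funpow[OF W(1) A(1)] q(2) W(3) unfolding hitset_def by auto
  moreover have "\<forall>i<Suc r. b i \<le> (p(r := q)) i \<and> ?W \<subseteq> (f ^^ (p(r := q)) i) -` A i"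
    using p q(1) by (auto simp: less_Suc_eq)
  ultimately show ?case by blast
qed

lemma box_multi_transitive_imp_Finf_transitive:
  assumes "box_multi_transitive T f"
  shows "fam_transitive Finf T f"
  unfolding fam_transitive_def Finf_iff_fun
proof (intro allI impI)
  fix U V r and n :: "nat \<Rightarrow> nat"
  assume UV: "openin T U \<and> U \<noteq> {} \<and> openin T V \<and> V \<noteq> {}"
  let ?V = "\<lambda>i. topspace T \<inter> (f ^^ n i) -` V"
  have "\<forall>i<r. openin T U \<and> U \<noteq> {} \<and> openin T (?V i) \<and> ?V i \<noteq> {}"
    using UV openin_Int_vimage_funpow[OF openin_topspace] transitive_vimage_nonempty
      box_multi_transitive_imp_transitive[OF assms] by blast
  then obtain k where k: "k > 0" "\<forall>i<r. U \<inter> (f ^^ (k * Suc i)) -` ?V i \<noteq> {}"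
    using assms[unfolded box_multi_transitive_def, rule_format, of r "\<lambda>_. U" ?V] by blast
  have "k * Suc i + n i \<in> hitset T f U V" if i: "i < r" for i
  proof -
    obtain x where "x \<in> U" "(f ^^ n i) ((f ^^ (k * Suc i)) x) \<in> V"
      using k(2) i by blast
    then show ?thesis
      using k(1) unfolding hitset_def by (auto simp: funpow_funpow_apply add.commute)
  qed
  with k(1) show "\<exists>k>0. \<forall>i<r. k * Suc i + n i \<in> hitset T f U V"
    by blast
qed

lemma Finf_transitive_imp_box_multi_transitive:
  assumes "fam_transitive Finf T f"
  shows "box_multi_transitive T f"
  unfolding box_multi_transitive_def
proof (intro allI impI)
  fix r and U V :: "nat \<Rightarrow> 'a set"
  assume UV: "\<forall>i<r. openin T (U i) \<and> U i \<noteq> {} \<and> openin T (V i) \<and> V i \<noteq> {}"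
  show "\<exists>k>0. \<forall>i<r. U i \<inter> (f ^^ (k * Suc i)) -` V i \<noteq> {}"
  proof (cases "r = 0")
    case False
    have inf: "fam_transitive {F. infinite F} T f"
      using assms by (rule Finf_transitive_imp_infinite_transitive)
    have ne: "topspace T \<noteq> {}"
      using UV False openin_subset[of T "U 0"] by auto
    have Vs: "\<forall>i<r. openin T (V i) \<and> V i \<noteq> {}" and Us: "\<forall>i<r. openin T (U i) \<and> U i \<noteq> {}"
      using UV by auto
    from infinite_transitive_common_pullback[OF inf openin_topspace ne Vs, where b="\<lambda>_. 0"]
    obtain V' q where V': "openin T V'" "V' \<noteq> {}" "\<forall>i<r. V' \<subseteq> (f ^^ q i) -` V i"
      by blast
    from infinite_transitive_common_pullback[OF inf openin_topspace ne Us, where b=q]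
    obtain U' p where U': "openin T U'" "U' \<noteq> {}" and p: "\<forall>i<r. q i \<le> p i \<and> U' \<subseteq> (f ^^ p i) -` U i"
      by blast
    have "hitset T f U' V' \<in> Finf"
      using assms U' V' unfolding fam_transitive_def by blast
    from this[unfolded Finf_iff_fun, rule_format, of r "\<lambda>i. p i - q i"]
    obtain k where k: "k > 0" "\<forall>i<r. k * Suc i + (p i - q i) \<in> hitset T f U' V'"
      by blast
    have "U i \<inter> (f ^^ (k * Suc i)) -` V i \<noteq> {}" if i: "i < r" for i
    proof -
      obtain y where y: "y \<in> U'" "(f ^^ (k * Suc i + (p i - q i))) y \<in> V'"
        using k(2) i unfolding hitset_def by blast
      have "(f ^^ p i) y \<in> U i"
        using p y(1) i by blast
      moreover have "(f ^^ q i) ((f ^^ (k * Suc i + (p i - q i))) y) \<in> V i"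
        using V'(3) y(2) i by blast
      moreover have "q i + (k * Suc i + (p i - q i)) = k * Suc i + p i"
        using p i by auto
      ultimately have "(f ^^ p i) y \<in> U i \<inter> (f ^^ (k * Suc i)) -` V i"
        by (simp add: funpow_funpow_apply)
      then show ?thesis by blast
    qed
    with k(1) show ?thesis by blast
  qed auto
qed

lemma nabla_point_transitive_imp_Finf_transitive:
  assumes "fam_point_transitive (nabla Finf) T f"
  shows "fam_transitive Finf T f"
  unfolding fam_transitive_def
proof (intro allI impI)
  fix U V assume UV: "openin T U \<and> U \<noteq> {} \<and> openin T V \<and> V \<noteq> {}"
  obtain x where D: "\<And>W. openin T W \<Longrightarrow> W \<noteq> {} \<Longrightarrow> diffset (visitset f x W) \<in> Finf"
    using assms unfolding fam_point_transitive_def nabla_def by blast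
  obtain d where "d \<in> diffset (visitset f x U)"
    using Finf_infinite[OF D] UV by (metis finite.emptyI ex_in_conv)
  then obtain b where b: "(f ^^ b) x \<in> U"
    unfolding mem_diffset_visitset by blast
  obtain d where "d \<in> diffset (visitset f x V)" "b < d"
    using Finf_infinite[OF D] UV unfolding infinite_nat_iff_unbounded by blast
  then obtain c where c: "b < c" "(f ^^ c) x \<in> V"
    unfolding mem_diffset_visitset by (metis add.commute trans_less_add1)
  define p where "p = c - b"
  let ?W = "U \<inter> (f ^^ p) -` V"
  have "(f ^^ b) x \<in> ?W"
    using b c by (simp add: p_def funpow_funpow_apply)
  then have "diffset (visitset f x ?W) \<in> Finf"
    using D openin_Int_vimage_funpow UV by blast
  then show "hitset T f U V \<in> Finf"
  proof (rule Finf_shift)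
    fix a assume "a \<in> diffset (visitset f x ?W)"
    then obtain e where "a > 0" "(f ^^ e) x \<in> U" "(f ^^ (e + a)) x \<in> ?W"
      unfolding mem_diffset_visitset by blast
    then show "a + p \<in> hitset T f U V"
      unfolding hitset_def by (auto simp: funpow_funpow_apply ac_simps intro!: exI[of _ "(f ^^ e) x"])
  qed
qed

definition pattern_points :: "'a set \<Rightarrow> nat list \<Rightarrow> 'a set" where
  "pattern_points U ns =
     {x \<in> topspace T. \<exists>k>0. \<forall>i<length ns. k * Suc i + ns ! i \<in> diffset (visitset f x U)}"

lemma openin_diffset_visitset:
  assumes "openin T U"
  shows "openin T {x \<in> topspace T. d \<in> diffset (visitset f x U)}"
  unfolding openin_subopen[of T "{x \<in> topspace T. d \<in> diffset (visitset f x U)}"]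
proof
  fix x assume "x \<in> {x \<in> topspace T. d \<in> diffset (visitset f x U)}"
  then obtain b where x: "x \<in> topspace T" and b: "d > 0" "b > 0" "(f ^^ b) x \<in> U" "(f ^^ (b + d)) x \<in> U"
    unfolding mem_diffset_visitset by blast
  let ?N = "topspace T \<inter> (f ^^ b) -` U \<inter> (f ^^ (b + d)) -` U"
  have "openin T ?N"
    using openin_Int_vimage_funpow[OF openin_Int_vimage_funpow[OF openin_topspace assms] assms] .
  moreover have "?N \<subseteq> {x \<in> topspace T. d \<in> diffset (visitset f x U)}"
    using b unfolding mem_diffset_visitset by blast
  ultimately show "\<exists>N. openin T N \<and> x \<in> N \<and> N \<subseteq> {x \<in> topspace T. d \<in> diffset (visitset f x U)}"
    using x b by blast
qed

lemma openin_pattern_points: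
  assumes "openin T U"
  shows "openin T (pattern_points U ns)"
  unfolding openin_subopen[of T "pattern_points U ns"]
proof
  fix x assume "x \<in> pattern_points U ns"
  then obtain k where x: "x \<in> topspace T" and k: "k > 0"
    "\<forall>i<length ns. k * Suc i + ns ! i \<in> diffset (visitset f x U)"
    unfolding pattern_points_def by blast
  let ?N = "(\<Inter>i\<in>{..<length ns}. {y \<in> topspace T. k * Suc i + ns ! i \<in> diffset (visitset f y U)})
            \<inter> topspace T"
  have "openin T ?N"
    using openin_diffset_visitset[OF assms] by (intro openin_INT) auto
  moreover have "?N \<subseteq> pattern_points U ns"
    using k(1) unfolding pattern_points_def by blast
  ultimately show "\<exists>N. openin T N \<and> x \<in> N \<and> N \<subseteq> pattern_points U ns"
    using x k(2) by blast
qed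

lemma pattern_points_dense:
  assumes "fam_transitive Finf T f" and "openin T U" "U \<noteq> {}" and "openin T W0" "W0 \<noteq> {}"
  shows "pattern_points U ns \<inter> W0 \<noteq> {}"
proof -
  have inf: "fam_transitive {F. infinite F} T f"
    using assms(1) by (rule Finf_transitive_imp_infinite_transitive)
  have "hitset T f U U \<in> Finf"
    using assms(1-3) unfolding fam_transitive_def by blast
  then obtain k where k: "k > 0" "\<forall>i<length ns. k * Suc i + ns ! i \<in> hitset T f U U"
    unfolding Finf_iff by blast
  let ?A = "\<lambda>i. U \<inter> (f ^^ (k * Suc i + ns ! i)) -` U"
  have "\<forall>i<length ns. openin T (?A i) \<and> ?A i \<noteq> {}"
    using k(2) openin_Int_vimage_funpow[OF assms(2,2)] unfolding hitset_def by blast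
  from infinite_transitive_common_pullback[OF inf assms(4,5) this, where b="\<lambda>_. 1"]
  obtain W p where W: "W \<noteq> {}" "W \<subseteq> W0" "openin T W"
    and p: "\<forall>i<length ns. 1 \<le> p i \<and> W \<subseteq> (f ^^ p i) -` ?A i"
    by blast
  obtain w where w: "w \<in> W"
    using W(1) by blast
  have "k * Suc i + ns ! i \<in> diffset (visitset f w U)" if i: "i < length ns" for i
  proof -
    have "(f ^^ p i) w \<in> ?A i" "p i > 0"
      using p w i by auto
    then show ?thesis
      unfolding mem_diffset_visitset using k(1) by (auto simp: funpow_funpow_apply ac_simps)
  qed
  moreover have "w \<in> topspace T"
    using openin_subset[OF W(3)] w by blast
  ultimately have "w \<in> pattern_points U ns"
    unfolding pattern_points_def using k(1) by blast
  then show ?thesis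
    using w W(2) by blast
qed

lemma Finf_transitive_imp_nabla_point_transitive:
  assumes Finf: "fam_transitive Finf T f" and "second_countable T"
    and Baire: "locally_compact_space T \<and> regular_space T" and "topspace T \<noteq> {}"
  shows "fam_point_transitive (nabla Finf) T f"
proof -
  obtain \<B> where \<B>: "countable \<B>" "\<forall>B\<in>\<B>. openin T B"
    "\<forall>U x. openin T U \<and> x \<in> U \<longrightarrow> (\<exists>B\<in>\<B>. x \<in> B \<and> B \<subseteq> U)"
    using assms(2) unfolding second_countable_def by (elim exE conjE) (rule that)
  let ?G = "(\<lambda>(B, ns). pattern_points B ns) ` ((\<B> - {{}}) \<times> UNIV)"
  have "countable ?G"
    using \<B>(1) by (intro countable_image countable_SIGMA) auto
  moreover have "openin T G \<and> T closure_of G = topspace T" if "G \<in> ?G" for G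
  proof -
    obtain B ns where B: "B \<in> \<B>" "B \<noteq> {}" and G: "G = pattern_points B ns"
      using \<open>G \<in> ?G\<close> by auto
    then have "openin T B"
      using \<B>(2) by blast
    then show ?thesis
      unfolding G dense_intersects_open
      using openin_pattern_points pattern_points_dense[OF Finf _ B(2)] by blast
  qed
  ultimately have "T closure_of \<Inter>?G = topspace T"
    by (rule Baire_category[OF disjI2[OF Baire]])
  then have "topspace T \<inter> \<Inter>?G \<noteq> {}"
    using assms(4) closure_of_restrict[of T "\<Inter>?G"] closure_of_empty by metis
  then obtain x where x: "x \<in> topspace T" "x \<in> \<Inter>?G"
    by blast
  have x_pattern: "x \<in> pattern_points B ns" if "B \<in> \<B>" "B \<noteq> {}" for B ns
  proof -
    have "pattern_points B ns \<in> ?G"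
      using that by (intro image_eqI[of _ _ "(B, ns)"]) auto
    then show ?thesis
      using x(2) by blast
  qed
  have "diffset (visitset f x U) \<in> Finf" if U: "openin T U" "U \<noteq> {}" for U
  proof -
    obtain B where B: "B \<in> \<B>" "B \<noteq> {}" "B \<subseteq> U"
      using \<B>(3) U by blast
    have "diffset (visitset f x B) \<in> Finf"
      using x_pattern[OF B(1,2)] unfolding Finf_iff pattern_points_def by blast
    then show ?thesis
      using diffset_visitset_mono[OF B(3)] by (rule Finf_mono)
  qed
  then show ?thesis
    unfolding fam_point_transitive_def nabla_def using x(1) by blast
qed

end

lemma compact_imp_second_countable:
  fixes X :: "'a::metric_space set"
  assumes "compact X"
  shows "second_countable (top_of_set X)"
proof -
  have "\<forall>m. \<exists>K. finite K \<and> K \<subseteq> X \<and> X \<subseteq> (\<Union>c\<in>K. ball c (inverse (Suc m)))"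
    using seq_compact_imp_totally_bounded[OF compact_imp_seq_compact[OF assms]] by simp
  then obtain K where K: "\<And>m. finite (K m)" "\<And>m. X \<subseteq> (\<Union>c\<in>K m. ball c (inverse (Suc m)))"
    by metis
  define \<B> where "\<B> = (\<lambda>(m, c). X \<inter> ball c (inverse (Suc m))) ` (SIGMA m:UNIV. K m)"
  have "countable \<B>"
    unfolding \<B>_def by (intro countable_image countable_SIGMA) (auto simp: K(1) countable_finite)
  moreover have "\<forall>B\<in>\<B>. openin (top_of_set X) B"
    unfolding \<B>_def by (auto intro: openin_Int_open)
  moreover have "\<exists>B\<in>\<B>. x \<in> B \<and> B \<subseteq> U" if U: "openin (top_of_set X) U" "x \<in> U" for U x
  proof -
    obtain e where e: "e > 0" "\<And>y. y \<in> X \<Longrightarrow> dist y x < e \<Longrightarrow> y \<in> U"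
      using U unfolding openin_euclidean_subtopology_iff by blast
    obtain m where m: "inverse (real (Suc m)) < e / 2"
      using reals_Archimedean[of "e / 2"] e(1) by auto
    have "x \<in> X"
      using U openin_subset by fastforce
    then obtain c where c: "c \<in> K m" "x \<in> ball c (inverse (Suc m))"
      using K(2) by blast
    have "X \<inter> ball c (inverse (Suc m)) \<subseteq> U"
    proof
      fix y assume y: "y \<in> X \<inter> ball c (inverse (Suc m))"
      have "dist y x \<le> dist y c + dist c x"
        by (rule dist_triangle)
      also have "\<dots> < e"
        using y c(2) m by (simp add: dist_commute)
      finally show "y \<in> U"
        using e(2) y by blast
    qed
    moreover have "X \<inter> ball c (inverse (Suc m)) \<in> \<B>"
      unfolding \<B>_def using c(1) by force
    ultimately show ?thesis
      using c(2) \<open>x \<in> X\<close> by blast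
  qed
  ultimately show ?thesis
    unfolding second_countable_def by blast
qed

theorem theorem4p9:
  fixes X :: "'a::metric_space set" and f :: "'a \<Rightarrow> 'a"
  assumes "compact X" and "X \<noteq> {}" and "continuous_on X f" and "f ` X \<subseteq> X"
  shows "(multi_transitive (top_of_set X) f \<longleftrightarrow> fam_transitive Finf (top_of_set X) f)
       \<and> (fam_transitive Finf (top_of_set X) f
            \<longleftrightarrow> fam_point_transitive (nabla Finf) (top_of_set X) f)"
proof -
  interpret dynamical_system "top_of_set X" f
    using assms(3,4) by unfold_locales (simp add: image_subset_iff_funcset)
  have "compact_space (top_of_set X)"
    using assms(1) by (simp add: compact_space_subtopology)
  then have "locally_compact_space (top_of_set X) \<and> regular_space (top_of_set X)"
    using compact_imp_locally_compact_space metrizable_imp_regular_space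
      metrizable_space_subtopology metrizable_space_euclidean by blast
  then have "fam_transitive Finf (top_of_set X) f
      \<longleftrightarrow> fam_point_transitive (nabla Finf) (top_of_set X) f"
    using Finf_transitive_imp_nabla_point_transitive compact_imp_second_countable[OF assms(1)]
      nabla_point_transitive_imp_Finf_transitive assms(2) by auto
  moreover have "multi_transitive (top_of_set X) f \<longleftrightarrow> fam_transitive Finf (top_of_set X) f"
    unfolding multi_transitive_iff_box_multi_transitive
    using box_multi_transitive_imp_Finf_transitive Finf_transitive_imp_box_multi_transitive by blast
  ultimately show ?thesis by blast
qed

end
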